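(* Let $d>1$ be an integer. Let $\mathbb{G}\subset \mathbb{P}^5=\mathbb{P}(\wedge^2 S_1)$ be the Pfaff–Plücker quadric of decomposable $1$-forms, let $$\widehat{\Pi}_d:=\{(\omega,\varphi)\in \mathbb{G}\times \mathbb{F}_d \mid \omega\cdot\varphi=0\},$$ and let $\overline{\Pi}_d\subset\mathbb{F}_d$ be its image under the second projection $\mathbf{p}:\widehat{\Pi}_d\to\mathbb{F}_d$ (the variety of foliations of degree $d$ tangent to some pencil of planes). Then $\mathbf{p}:\widehat{\Pi}_d\to\overline{\Pi}_d$ is generically bijective; that is, a general foliation $\varphi\in\overline{\Pi}_d$ is tangent to one and only one $\omega\in\mathbb{G}$.
   Context: Work over $\mathbb{C}$. Let $x_1,\dots,x_4$ be homogeneous coordinates on $\mathbb{P}^3$ and $S_k$ the space of homogeneous polynomials of degree $k$ in $\mathbb{C}[x_1,\dots,x_4]$; let $S_1^*=\langle\partial_{x_1},\dots,\partial_{x_4}\rangle$ and $\partial_R=\sum x_i\partial_{x_i}$ (radial vector field). A foliation of dimension one and degree $d$ on $\mathbb{P}^3$ is an element of $\mathbb{F}_d:=\mathbb{P}(H^0(\mathbb{P}^3,T\mathbb{P}^3(d-1)))$, where $H^0(\mathbb{P}^3,T\mathbb{P}^3(d-1))=(S_d\otimes S_1^* )/(S_{d-1}\cdot\partial_R)$; it is represented by a vector field $\varphi=\sum_i p_i\partial_{x_i}$ with $p_i\in S_d$, modulo multiples of $\partial_R$ and scalars. A distribution of degree $0$ on $\mathbb{P}^3$ is a $1$-form $\omega=\sum_{i<j}\alpha_{ij}(x_j\,dx_i-x_i\,dx_j)$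 with $\alpha_{ij}\in\mathbb{C}$ not all zero, up to scalar; it is identified with the antisymmetric $4\times4$ matrix $(\alpha_{ij})$, equivalently with the bivector $\sum\alpha_{ij}x_i\wedge x_j$, so the space of such distributions is $\mathbb{P}^5=\mathbb{P}(\wedge^2 S_1)$. The Pfaff–Plücker quadric $\mathbb{G}\subset\mathbb{P}^5$ is the locus of rank-$2$ matrices (decomposable bivectors), i.e. forms $u\,dv-v\,du$ with $u,v\in S_1$ independent (pencils of planes). Writing $\omega=\sum a_i\,dx_i$ with $a_i\in S_1$ (so $\sum a_ix_i=0$), the foliation $\varphi$ is tangent to $\omega$ if $\omega\cdot\varphi:=\sum a_ip_i=0$ in $S_{d+1}$ (this is independent of the representative of $\varphi$). *)

theory Defs
  imports "HOL-Analysis.Analysis" "HOL-Library.Poly_Mapping"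
begin

text \<open>Homogeneous coordinates x_1..x_4 are indexed by the numeral type 4.
  Polynomials in C[x_1,...,x_4] are finitely supported maps from monomials
  (exponent vectors 4 =>0 nat) to complex coefficients.\<close>

type_synonym mono = "4 \<Rightarrow>\<^sub>0 nat"
type_synonym mpoly = "mono \<Rightarrow>\<^sub>0 complex"

definition var :: "4 \<Rightarrow> mpoly" where
  "var i = Poly_Mapping.single (Poly_Mapping.single i 1) 1"

definition cst :: "complex \<Rightarrow> mpoly" where
  "cst c = Poly_Mapping.single 0 c"

definition mono_deg :: "mono \<Rightarrow> nat" where
  "mono_deg m = (\<Sum>i\<in>UNIV. Poly_Mapping.lookup m i)"

definition S :: "nat \<Rightarrow> mpoly set" where
  "S k = {p. \<forall>m\<in>Poly_Mapping.keys p. mono_deg m = k}"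

text \<open>Vector fields phi = sum_i p_i d/dx_i with p_i in S_d (elements of S_d \<otimes> S_1^*).\<close>
definition VF :: "nat \<Rightarrow> (4 \<Rightarrow> mpoly) set" where
  "VF d = {\<phi>. \<forall>i. \<phi> i \<in> S d}"

definition radial_multiples :: "nat \<Rightarrow> (4 \<Rightarrow> mpoly) set" where
  "radial_multiples d = {\<phi>. \<exists>g\<in>S (d - 1). \<forall>i. \<phi> i = g * var i}"

text \<open>A degree-0 distribution is an antisymmetric 4x4 matrix A (up to scalar);
  omega = sum_i a_i dx_i with a_i = sum_j A_ij x_j.\<close>
definition antisym_mat :: "complex^4^4 \<Rightarrow> bool" where
  "antisym_mat A \<longleftrightarrow> (\<forall>i j. A $ i $ j = - (A $ j $ i))"

text \<open>Pfaff-Pluecker quadric G: the rank-2 antisymmetric matrices.\<close>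
definition in_G :: "complex^4^4 \<Rightarrow> bool" where
  "in_G A \<longleftrightarrow> antisym_mat A \<and> rank A = 2"

definition form_coeff :: "complex^4^4 \<Rightarrow> 4 \<Rightarrow> mpoly" where
  "form_coeff A i = (\<Sum>j\<in>UNIV. cst (A $ i $ j) * var j)"

definition tangent :: "complex^4^4 \<Rightarrow> (4 \<Rightarrow> mpoly) \<Rightarrow> bool" where
  "tangent A \<phi> \<longleftrightarrow> (\<Sum>i\<in>UNIV. form_coeff A i * \<phi> i) = 0"

text \<open>Affine cone (in S_d \<otimes> S_1^*) over the variety Pi_d-bar of degree-d foliations
  tangent to some pencil of planes: representatives phi that are not multiples of
  the radial field (so they define a point of F_d) and are tangent to some omega in G.\<close>
definition Pi_cone :: "nat \<Rightarrow> (4 \<Rightarrow> mpoly) set" where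
  "Pi_cone d = {\<phi>\<in>VF d. \<phi> \<notin> radial_multiples d \<and> (\<exists>A. in_G A \<and> tangent A \<phi>)}"

inductive_set polyfun :: "((4 \<Rightarrow> mpoly) \<Rightarrow> complex) set" where
  pf_const: "(\<lambda>\<phi>. c) \<in> polyfun"
| pf_coord: "(\<lambda>\<phi>. Poly_Mapping.lookup (\<phi> i) m) \<in> polyfun"
| pf_add: "F \<in> polyfun \<Longrightarrow> G \<in> polyfun \<Longrightarrow> (\<lambda>\<phi>. F \<phi> + G \<phi>) \<in> polyfun"
| pf_mult: "F \<in> polyfun \<Longrightarrow> G \<in> polyfun \<Longrightarrow> (\<lambda>\<phi>. F \<phi> * G \<phi>) \<in> polyfun"

definition unique_pencil :: "(4 \<Rightarrow> mpoly) \<Rightarrow> bool" where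
  "unique_pencil \<phi> \<longleftrightarrow> (\<exists>A. in_G A \<and> tangent A \<phi>) \<and>
     (\<forall>A B. in_G A \<and> tangent A \<phi> \<and> in_G B \<and> tangent B \<phi> \<longrightarrow> (\<exists>c::complex. B = (\<chi> i j. c * A $ i $ j)))"

end

theory Submission
  imports Defs
begin

text \<open>
  Write \<open>\<omega> = \<Sum> \<alpha>\<^sub>i\<^sub>j (x\<^sub>j dx\<^sub>i - x\<^sub>i dx\<^sub>j)\<close>, summed over \<open>i < j\<close>. The coefficient of a monomial of
  degree \<open>d + 1\<close> in \<open>\<omega> \<cdot> \<phi>\<close> is a linear form in the six coordinates \<open>\<alpha>\<^sub>i\<^sub>j\<close>, whose
  coefficients are coefficients of \<open>\<phi>\<close>. Five suitable monomials give a \<open>5 \<times> 6\<close> linear system;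
  let \<open>F(\<phi>)\<close> be its \<open>5 \<times> 5\<close> minor omitting the \<open>\<alpha>\<^sub>1\<^sub>2\<close> column. \<open>F\<close> is a polynomial in the
  coefficients of \<open>\<phi>\<close>, and where it does not vanish the system has rank 5, so the distributions
  tangent to \<open>\<phi>\<close>, decomposable or not, form at most one point of \<open>\<bbbP>\<^sup>5\<close>. \<open>F\<close> does not vanish
  identically on \<open>\<Pi>\<^sub>d\<close>: \<open>x\<^sub>3\<^sup>d \<partial>\<^sub>3 + x\<^sub>4\<^sup>d \<partial>\<^sub>4\<close> is tangent to the pencil spanned by \<open>x\<^sub>1, x\<^sub>2\<close>, and
  for it the minor is diagonal with entries \<open>\<plusminus>1\<close>.
\<close>

lemma lookup_single_mult_add:
  fixes k l :: "'a::cancel_comm_monoid_add" and f :: "'a \<Rightarrow>\<^sub>0 'b::semiring_0"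
  shows "Poly_Mapping.lookup (Poly_Mapping.single k a * f) (k + l) = a * Poly_Mapping.lookup f l"
  by (simp add: lookup_mult lookup_single when_mult mult_when Sum_any_right_distrib[symmetric])

lemma lookup_single_mult_eq_0:
  fixes k m :: "'a::monoid_add" and f :: "'a \<Rightarrow>\<^sub>0 'b::semiring_0"
  assumes "\<And>l. m \<noteq> k + l"
  shows "Poly_Mapping.lookup (Poly_Mapping.single k a * f) m = 0"
proof -
  have "(a when k = k') * Sum_any (\<lambda>l. Poly_Mapping.lookup f l when m = k' + l) = 0" for k'
    using assms by (cases "k = k'") simp_all
  then show ?thesis
    by (simp add: lookup_mult lookup_single)
qed

lemma lookup_cst_mult: "Poly_Mapping.lookup (cst c * p) m = c * Poly_Mapping.lookup p m"
  using lookup_single_mult_add[of 0 c p m] by (simp add: cst_def)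

lemma single_one_neq_zero: "Poly_Mapping.single k (1::'a::zero_neq_one) \<noteq> 0"
  by (metis lookup_single_eq lookup_zero zero_neq_one)

lemma single_eq_single_iff:
  "Poly_Mapping.single a n = Poly_Mapping.single b n \<longleftrightarrow> a = b \<or> n = 0"
  by (metis lookup_single_eq lookup_single_not_eq single_zero)

lemma single_add_single_eq_iff:
  fixes a b c e :: "'a" and m n :: nat
  assumes "a \<noteq> b" "c \<noteq> e" "0 < m" "0 < n" "m \<noteq> n"
  shows "Poly_Mapping.single a m + Poly_Mapping.single b n =
      Poly_Mapping.single c m + Poly_Mapping.single e n \<longleftrightarrow> a = c \<and> b = e"
proof
  assume eq: "Poly_Mapping.single a m + Poly_Mapping.single b n =
    Poly_Mapping.single c m + Poly_Mapping.single e n"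
  have "a = c"
    using arg_cong[where f = "\<lambda>p. Poly_Mapping.lookup p a", OF eq] assms
    by (auto simp: lookup_add lookup_single when_def split: if_splits)
  moreover have "b = e"
    using arg_cong[where f = "\<lambda>p. Poly_Mapping.lookup p b", OF eq] assms
    by (auto simp: lookup_add lookup_single when_def split: if_splits)
  ultimately show "a = c \<and> b = e" ..
qed simp

lemma mono_deg_single: "mono_deg (Poly_Mapping.single i n) = n"
  unfolding mono_deg_def sum_4 using exhaust_4[of i] by (auto simp: lookup_single when_def)

definition var_mult_coeff :: "4 \<Rightarrow> mpoly \<Rightarrow> mono \<Rightarrow> complex" where
  "var_mult_coeff j p m =
     (if Poly_Mapping.lookup m j > 0 then Poly_Mapping.lookup p (m - Poly_Mapping.single j 1) else 0)"

lemma lookup_var_mult: "Poly_Mapping.lookup (var j * p) m = var_mult_coeff j p m"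
proof (cases "Poly_Mapping.lookup m j > 0")
  case True
  then have "m = Poly_Mapping.single j 1 + (m - Poly_Mapping.single j 1)"
    by (intro poly_mapping_eqI) (auto simp: lookup_add lookup_minus lookup_single when_def)
  then have "Poly_Mapping.lookup (var j * p) m = Poly_Mapping.lookup p (m - Poly_Mapping.single j 1)"
    unfolding var_def by (metis lookup_single_mult_add mult_1)
  with True show ?thesis by (simp add: var_mult_coeff_def)
next
  case False
  then have "m \<noteq> Poly_Mapping.single j 1 + l" for l
    by (auto simp: lookup_add)
  with False show ?thesis
    unfolding var_def var_mult_coeff_def by (simp add: lookup_single_mult_eq_0)
qed

lemma var_mult_coeff_single:
  "var_mult_coeff j (Poly_Mapping.single \<nu> 1) \<mu> = (if \<mu> = Poly_Mapping.single j 1 + \<nu> then 1 else 0)"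
  by (simp add: lookup_var_mult[symmetric] var_def mult_single lookup_single when_def)

lemma var_mult_coeff_zero: "var_mult_coeff j 0 \<mu> = 0"
  by (simp add: var_mult_coeff_def)

lemma polyfun_var_mult_coeff: "(\<lambda>\<phi>. var_mult_coeff j (\<phi> i) m) \<in> polyfun"
  unfolding var_mult_coeff_def
  by (cases "Poly_Mapping.lookup m j > 0") (simp_all add: pf_const pf_coord)

lemma polyfun_sum:
  "finite I \<Longrightarrow> (\<And>i. i \<in> I \<Longrightarrow> F i \<in> polyfun) \<Longrightarrow> (\<lambda>\<phi>. \<Sum>i\<in>I. F i \<phi>) \<in> polyfun"
  by (induction I rule: finite_induct) (simp_all add: pf_const pf_add)

lemma polyfun_prod:
  "finite I \<Longrightarrow> (\<And>i. i \<in> I \<Longrightarrow> F i \<in> polyfun) \<Longrightarrow> (\<lambda>\<phi>. \<Prod>i\<in>I. F i \<phi>) \<in> polyfun"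
  by (induction I rule: finite_induct) (simp_all add: pf_const pf_mult)

lemma polyfun_diff: "F \<in> polyfun \<Longrightarrow> G \<in> polyfun \<Longrightarrow> (\<lambda>\<phi>. F \<phi> - G \<phi>) \<in> polyfun"
  using pf_add[OF _ pf_mult[OF pf_const[of "-1"]], of F G] by simp

lemma polyfun_det:
  fixes M :: "(4 \<Rightarrow> mpoly) \<Rightarrow> complex^'n^'n"
  assumes "\<And>i j. (\<lambda>\<phi>. M \<phi> $ i $ j) \<in> polyfun"
  shows "(\<lambda>\<phi>. det (M \<phi>)) \<in> polyfun"
  unfolding det_def
  by (intro polyfun_sum pf_mult[OF pf_const] polyfun_prod) (simp_all add: assms)

lemma exhaust_5:
  fixes x :: 5
  shows "x = 1 \<or> x = 2 \<or> x = 3 \<or> x = 4 \<or> x = 5"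
proof (induct x)
  case (of_int z)
  then have "z = 0 \<or> z = 1 \<or> z = 2 \<or> z = 3 \<or> z = 4" by fastforce
  then show ?case by auto
qed

lemma forall_5: "(\<forall>i::5. P i) \<longleftrightarrow> P 1 \<and> P 2 \<and> P 3 \<and> P 4 \<and> P 5"
  by (metis exhaust_5)

lemma UNIV_5: "UNIV = {1, 2, 3, 4, 5::5}"
  using exhaust_5 by auto

lemma sum_5: "sum f (UNIV::5 set) = f 1 + f 2 + f 3 + f 4 + f 5"
  unfolding UNIV_5 by (simp add: ac_simps)

lemma prod_5: "prod f (UNIV::5 set) = f 1 * f 2 * f 3 * f 4 * f 5"
  unfolding UNIV_5 by (simp add: ac_simps)

lemma det_nz_matrix_vector_mult_eq_0:
  fixes M :: "'a::field^'n^'n"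
  assumes "det M \<noteq> 0" "M *v x = 0"
  shows "x = 0"
  using assms inj_matrix_vector_mult[of M] invertible_det_nz
  by (metis injD matrix_vector_mult_0_right)

lemma rank_0_gen: "rank (0::'a::field^'n^'m) = 0"
proof -
  have "rows (0::'a^'n^'m) = {0}"
    unfolding rows_def row_def by (auto simp: vec_eq_iff)
  then show ?thesis
    unfolding row_rank_def_gen by simp
qed

lemma in_G_nonzero: "in_G A \<Longrightarrow> A \<noteq> 0"
  unfolding in_G_def by (auto simp: rank_0_gen)

lemma rank_antisym_unit:
  fixes i j :: "'n::finite"
  assumes "i \<noteq> j"
  shows "rank ((\<chi> a b. if a = i \<and> b = j then 1 else if a = j \<and> b = i then -1 else 0)
    :: 'a::field^'n^'n) = 2" (is "rank ?A = 2")
proof -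
  have row: "row a ?A = (if a = i then axis j 1 else if a = j then - axis i 1 else 0)" for a
    using assms by (auto simp: row_def axis_def vec_eq_iff)
  have "rows ?A \<subseteq> {0, axis j 1, - axis i 1}"
    unfolding rows_def row by auto
  also have "\<dots> \<subseteq> vec.span {axis j 1, axis i 1}"
    by (simp add: vec.span_zero vec.span_base vec.span_neg)
  finally have rows_in_span: "rows ?A \<subseteq> vec.span {axis j 1, axis i 1}" .
  have basis_in_span: "{axis j 1, axis i 1} \<subseteq> vec.span (rows ?A)"
  proof -
    have "row a ?A \<in> vec.span (rows ?A)" for a
      unfolding rows_def by (rule vec.span_base) blast
    from this[of i] this[of j]
    show ?thesis
      unfolding row using assms vec.span_neg[of "- axis i 1"] by simp
  qed
  have span_rows: "vec.span (rows ?A) = vec.span {axis j 1, axis i 1}"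
    using rows_in_span basis_in_span by (intro vec.span_eq[THEN iffD2] conjI)
  have "rank ?A = vec.dim (vec.span (rows ?A))"
    by (simp add: row_rank_def_gen)
  also have "\<dots> = vec.dim {axis j 1, axis i (1::'a)}"
    unfolding span_rows by simp
  also have "\<dots> = card {axis j 1, axis i (1::'a)}"
    by (rule vec.dim_eq_card_independent, rule vec.independent_mono[OF independent_cart_basis])
      (auto simp: cart_basis_def)
  also have "\<dots> = 2"
    using assms by (simp add: axis_eq_axis)
  finally show ?thesis .
qed

lemma antisym_mat_diag: "antisym_mat A \<Longrightarrow> A $ i $ i = 0"
  unfolding antisym_mat_def
  by (metis add_eq_0_iff_both_eq_0 eq_neg_iff_add_eq_0 mult_2 mult_eq_0_iff zero_neq_numeral)

text \<open>Together with \<open>A $ 1 $ 2\<close>, these five entries are the Pluecker coordinates of an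
  antisymmetric \<open>A\<close>.\<close>

definition pair_row :: "5 \<Rightarrow> 4" where
  "pair_row l = (if l = 1 then 1 else if l = 2 then 1 else if l = 3 then 2 else if l = 4 then 2 else 3)"

definition pair_col :: "5 \<Rightarrow> 4" where
  "pair_col l = (if l = 1 then 3 else if l = 2 then 4 else if l = 3 then 3 else 4)"

lemma pair_row_col_simps:
  "pair_row 1 = 1" "pair_row 2 = 1" "pair_row 3 = 2" "pair_row 4 = 2" "pair_row 5 = 3"
  "pair_col 1 = 3" "pair_col 2 = 4" "pair_col 3 = 3" "pair_col 4 = 4" "pair_col 5 = 4"
  by (simp_all add: pair_row_def pair_col_def)

definition plucker_rest :: "complex^4^4 \<Rightarrow> complex^5" where
  "plucker_rest A = (\<chi> l. A $ pair_row l $ pair_col l)"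

lemma antisym_mat_eq_0I:
  assumes "antisym_mat C" "C $ 1 $ 2 = 0" "plucker_rest C = 0"
  shows "C = 0"
proof -
  have upper: "C $ 1 $ 2 = 0" "C $ 1 $ 3 = 0" "C $ 1 $ 4 = 0" "C $ 2 $ 3 = 0" "C $ 2 $ 4 = 0"
    "C $ 3 $ 4 = 0"
    using assms(2,3) unfolding plucker_rest_def vec_eq_iff forall_5
    by (simp_all add: pair_row_col_simps)
  have "C $ i $ j = 0" for i j
    using assms(1) upper exhaust_4[of i] exhaust_4[of j] antisym_mat_diag[OF assms(1)]
    unfolding antisym_mat_def by metis
  then show ?thesis by (simp add: vec_eq_iff)
qed

lemma sum_antisym_mat:
  fixes L :: "4 \<Rightarrow> 4 \<Rightarrow> complex"
  assumes "antisym_mat A"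
  shows "(\<Sum>i\<in>UNIV. \<Sum>j\<in>UNIV. A $ i $ j * L i j) =
     A $ 1 $ 2 * (L 1 2 - L 2 1) +
     (\<Sum>l\<in>UNIV. (L (pair_row l) (pair_col l) - L (pair_col l) (pair_row l)) * plucker_rest A $ l)"
proof -
  have anti: "A $ j $ i = - A $ i $ j" for i j
    using assms unfolding antisym_mat_def by blast
  show ?thesis
    unfolding sum_4 sum_5 pair_row_col_simps plucker_rest_def vec_lambda_beta
    by (simp add: antisym_mat_diag[OF assms] anti[of 1 2] anti[of 1 3] anti[of 1 4] anti[of 2 3]
        anti[of 2 4] anti[of 3 4] algebra_simps)
qed

text \<open>The test monomials \<open>x\<^sub>1x\<^sub>3\<^sup>d, x\<^sub>1x\<^sub>4\<^sup>d, x\<^sub>2x\<^sub>3\<^sup>d, x\<^sub>2x\<^sub>4\<^sup>d, x\<^sub>4x\<^sub>3\<^sup>d\<close> are chosen so that the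
  tangency matrix of the witness field \<open>x\<^sub>3\<^sup>d \<partial>\<^sub>3 + x\<^sub>4\<^sup>d \<partial>\<^sub>4\<close> is diagonal.\<close>

definition test_monomial :: "nat \<Rightarrow> 5 \<Rightarrow> mono" where
  "test_monomial d k =
     (if k = 1 then Poly_Mapping.single 1 1 + Poly_Mapping.single 3 d
      else if k = 2 then Poly_Mapping.single 1 1 + Poly_Mapping.single 4 d
      else if k = 3 then Poly_Mapping.single 2 1 + Poly_Mapping.single 3 d
      else if k = 4 then Poly_Mapping.single 2 1 + Poly_Mapping.single 4 d
      else Poly_Mapping.single 4 1 + Poly_Mapping.single 3 d)"

lemma test_monomial_simps:
  "test_monomial d 1 = Poly_Mapping.single 1 1 + Poly_Mapping.single 3 d"
  "test_monomial d 2 = Poly_Mapping.single 1 1 + Poly_Mapping.single 4 d"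
  "test_monomial d 3 = Poly_Mapping.single 2 1 + Poly_Mapping.single 3 d"
  "test_monomial d 4 = Poly_Mapping.single 2 1 + Poly_Mapping.single 4 d"
  "test_monomial d 5 = Poly_Mapping.single 4 1 + Poly_Mapping.single 3 d"
  by (simp_all add: test_monomial_def)

definition tangency_coeff :: "nat \<Rightarrow> (4 \<Rightarrow> mpoly) \<Rightarrow> 5 \<Rightarrow> 4 \<Rightarrow> 4 \<Rightarrow> complex" where
  "tangency_coeff d \<phi> k i j =
     var_mult_coeff j (\<phi> i) (test_monomial d k) - var_mult_coeff i (\<phi> j) (test_monomial d k)"

definition tangency_matrix :: "nat \<Rightarrow> (4 \<Rightarrow> mpoly) \<Rightarrow> complex^5^5" where
  "tangency_matrix d \<phi> = (\<chi> k l. tangency_coeff d \<phi> k (pair_row l) (pair_col l))"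

lemma polyfun_det_tangency_matrix: "(\<lambda>\<phi>. det (tangency_matrix d \<phi>)) \<in> polyfun"
  by (rule polyfun_det)
    (simp add: tangency_matrix_def tangency_coeff_def polyfun_diff polyfun_var_mult_coeff)

lemma tangent_coeff_eq_0:
  assumes "tangent A \<phi>"
  shows "(\<Sum>i\<in>UNIV. \<Sum>j\<in>UNIV. A $ i $ j * var_mult_coeff j (\<phi> i) m) = 0"
proof -
  have "Poly_Mapping.lookup (\<Sum>i\<in>UNIV. form_coeff A i * \<phi> i) m = 0"
    using assms unfolding tangent_def by simp
  then show ?thesis
    unfolding form_coeff_def
    by (simp add: lookup_sum sum_distrib_right lookup_cst_mult mult.assoc lookup_var_mult)
qed

lemma tangent_imp_tangency_system:
  assumes "antisym_mat A" "tangent A \<phi>"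
  shows "tangency_matrix d \<phi> *v plucker_rest A = - (A $ 1 $ 2) *s (\<chi> k. tangency_coeff d \<phi> k 1 2)"
proof -
  have "A $ 1 $ 2 * tangency_coeff d \<phi> k 1 2 + (tangency_matrix d \<phi> *v plucker_rest A) $ k = 0" for k
    using tangent_coeff_eq_0[OF assms(2), of "test_monomial d k"]
    unfolding sum_antisym_mat[OF assms(1)]
    by (simp add: tangency_coeff_def tangency_matrix_def matrix_vector_mult_def mult.commute)
  then show ?thesis
    by (simp add: vec_eq_iff eq_neg_iff_add_eq_0 add.commute)
qed

lemma tangent_entry12_nonzero:
  assumes "det (tangency_matrix d \<phi>) \<noteq> 0" "antisym_mat A" "tangent A \<phi>" "A \<noteq> 0"
  shows "A $ 1 $ 2 \<noteq> 0"
proof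
  assume A12: "A $ 1 $ 2 = 0"
  then have "tangency_matrix d \<phi> *v plucker_rest A = 0"
    using tangent_imp_tangency_system[OF assms(2,3)] by simp
  then have "plucker_rest A = 0"
    using det_nz_matrix_vector_mult_eq_0 assms(1) by blast
  then show False
    using antisym_mat_eq_0I assms(2,4) A12 by blast
qed

lemma tangent_forms_proportional:
  assumes det: "det (tangency_matrix d \<phi>) \<noteq> 0"
    and A: "antisym_mat A" "tangent A \<phi>" "A \<noteq> 0"
    and B: "antisym_mat B" "tangent B \<phi>"
  shows "B = (\<chi> i j. (B $ 1 $ 2 / A $ 1 $ 2) * A $ i $ j)"
proof -
  let ?M = "tangency_matrix d \<phi>"
  define C where "C = (\<chi> i j. A $ 1 $ 2 * B $ i $ j - B $ 1 $ 2 * A $ i $ j)"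
  have "antisym_mat C"
    unfolding antisym_mat_def
  proof (intro allI)
    fix i j
    have "A $ i $ j = - A $ j $ i" "B $ i $ j = - B $ j $ i"
      using A(1) B(1) unfolding antisym_mat_def by blast+
    then show "C $ i $ j = - C $ j $ i"
      by (simp add: C_def algebra_simps)
  qed
  moreover have "C $ 1 $ 2 = 0"
    by (simp add: C_def mult.commute)
  moreover have "plucker_rest C = 0"
  proof (rule det_nz_matrix_vector_mult_eq_0[OF det])
    have "plucker_rest C = A $ 1 $ 2 *s plucker_rest B - B $ 1 $ 2 *s plucker_rest A"
      by (simp add: C_def plucker_rest_def vec_eq_iff)
    then have "?M *v plucker_rest C =
        A $ 1 $ 2 *s (?M *v plucker_rest B) - B $ 1 $ 2 *s (?M *v plucker_rest A)"
      by (simp add: matrix_vector_mult_diff_distrib vector_scalar_commute)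
    also have "\<dots> = 0"
      by (simp add: tangent_imp_tangency_system A(1,2) B vec_eq_iff)
    finally show "?M *v plucker_rest C = 0" .
  qed
  ultimately have "C = 0"
    by (rule antisym_mat_eq_0I)
  then show ?thesis
    using tangent_entry12_nonzero[OF det A] by (simp add: C_def vec_eq_iff field_simps)
qed

lemma unique_pencil_if_det_nz:
  assumes "det (tangency_matrix d \<phi>) \<noteq> 0" "\<exists>A. in_G A \<and> tangent A \<phi>"
  shows "unique_pencil \<phi>"
  unfolding unique_pencil_def
proof (intro conjI allI impI)
  fix A B
  assume "in_G A \<and> tangent A \<phi> \<and> in_G B \<and> tangent B \<phi>"
  then show "\<exists>c. B = (\<chi> i j. c * A $ i $ j)"
    using tangent_forms_proportional[OF assms(1)] in_G_nonzero unfolding in_G_def by blast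
qed (fact assms(2))

definition witness_field :: "nat \<Rightarrow> 4 \<Rightarrow> mpoly" where
  "witness_field d i =
     (if i = 3 \<or> i = 4 then Poly_Mapping.single (Poly_Mapping.single i d) 1 else 0)"

definition witness_pencil :: "complex^4^4" where
  "witness_pencil = (\<chi> i j. if i = 1 \<and> j = 2 then 1 else if i = 2 \<and> j = 1 then -1 else 0)"

lemma witness_field_in_VF: "witness_field d \<in> VF d"
  unfolding VF_def S_def witness_field_def by (simp add: mono_deg_single)

lemma witness_field_not_radial: "witness_field d \<notin> radial_multiples d"
proof
  assume "witness_field d \<in> radial_multiples d"
  then obtain g where g: "\<And>i. witness_field d i = g * var i"
    unfolding radial_multiples_def by blast
  have "var 1 \<noteq> 0"
    unfolding var_def by (rule single_one_neq_zero)
  with g[of 1] have "g = 0"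
    by (simp add: witness_field_def)
  with g[of 3] show False
    by (simp add: witness_field_def single_one_neq_zero)
qed

lemma witness_pencil_in_G: "in_G witness_pencil"
  unfolding in_G_def antisym_mat_def witness_pencil_def
  by (auto simp: rank_antisym_unit)

lemma witness_pencil_tangent: "tangent witness_pencil (witness_field d)"
proof -
  have "form_coeff witness_pencil 3 = 0" "form_coeff witness_pencil 4 = 0"
    unfolding form_coeff_def witness_pencil_def cst_def by simp_all
  then show ?thesis
    unfolding tangent_def sum_4 by (simp add: witness_field_def)
qed

lemma tangency_matrix_witness:
  assumes "d > 1"
  shows "tangency_matrix d (witness_field d) = (\<chi> k l. if k = l then (if k = 5 then 1 else -1) else 0)"
  unfolding vec_eq_iff forall_5 tangency_matrix_def tangency_coeff_def
  using assms
  by (simp add: pair_row_col_simps witness_field_def test_monomial_simps var_mult_coeff_single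
      var_mult_coeff_zero single_add_single_eq_iff single_eq_single_iff)

lemma det_tangency_matrix_witness:
  "d > 1 \<Longrightarrow> det (tangency_matrix d (witness_field d)) \<noteq> 0"
  unfolding tangency_matrix_witness by (subst det_diagonal) (simp_all add: prod_5)

theorem proposition5p1:
  fixes d :: nat
  assumes "d > 1"
  shows "\<exists>F\<in>polyfun. (\<exists>\<phi>\<in>Pi_cone d. F \<phi> \<noteq> 0) \<and>
           (\<forall>\<phi>\<in>Pi_cone d. F \<phi> \<noteq> 0 \<longrightarrow> unique_pencil \<phi>)"
proof (intro bexI[of _ "\<lambda>\<phi>. det (tangency_matrix d \<phi>)"] conjI ballI impI)
  show "(\<lambda>\<phi>. det (tangency_matrix d \<phi>)) \<in> polyfun"
    by (rule polyfun_det_tangency_matrix)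
  have "witness_field d \<in> Pi_cone d"
    unfolding Pi_cone_def
    using witness_field_in_VF witness_field_not_radial witness_pencil_in_G witness_pencil_tangent
    by blast
  then show "\<exists>\<phi>\<in>Pi_cone d. det (tangency_matrix d \<phi>) \<noteq> 0"
    using det_tangency_matrix_witness[OF assms] by blast
  fix \<phi>
  assume "\<phi> \<in> Pi_cone d" "det (tangency_matrix d \<phi>) \<noteq> 0"
  then show "unique_pencil \<phi>"
    unfolding Pi_cone_def by (blast intro: unique_pencil_if_det_nz)
qed

end
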